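(* Let $x\in(0,1)$ and let $n$ be an integer with $n\ge n_0(x)$. Then for every integer $m\ge 2n+1$, \[ \big|m-A_m^{n}\big|<\frac{2x^{2n+1-m}}{(1-x)^{2n+2}}\cdot\frac{(n!)^2}{((2n)!)^2}. \]
   Context: For $n\ge1$ let $y_n(z)=\sum_{k=0}^{n}\frac{(n+k)!}{(n-k)!\,k!}\left(\frac{z}{2}\right)^k$ be the $n$-th Bessel polynomial and let $\alpha_{n1},\dots,\alpha_{nn}$ be its zeros (they are simple). Put $a_{nk}=1-\alpha_{nk}/2$ and $b_{nk}=1+\alpha_{nk}/2$ for $k=1,\dots,n$. For $m\ge1$ define $A_m^{n}=\sum_{k=1}^n\big(a_{nk}^m-b_{nk}^m\big)$. For $x\in(0,1)$ put $n_0(x)=\max\{14,\;x^2(1-x)^{-2}\}-1$. *)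

theory Defs
  imports "HOL-Analysis.Analysis" "HOL-Computational_Algebra.Polynomial"
begin

definition bessel_poly :: "nat \<Rightarrow> complex poly" where
  "bessel_poly n = (\<Sum>k\<le>n. monom (of_real (fact (n+k) / (fact (n-k) * fact k) / 2 ^ k)) k)"

text \<open>The set of zeros of y_n (they are simple, so summing over the set equals summing over zeros with multiplicity).\<close>
definition bessel_zeros :: "nat \<Rightarrow> complex set" where
  "bessel_zeros n = {z. poly (bessel_poly n) z = 0}"

definition A_bessel :: "nat \<Rightarrow> nat \<Rightarrow> complex" where
  "A_bessel m n = (\<Sum>\<alpha>\<in>bessel_zeros n. (1 - \<alpha>/2) ^ m - (1 + \<alpha>/2) ^ m)"

definition n0 :: "real \<Rightarrow> real" where
  "n0 x = max 14 (x^2 / (1-x)^2) - 1"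

end

theory Submission
  imports Defs "HOL-Complex_Analysis.Complex_Analysis" "HOL-Computational_Algebra.Fundamental_Theorem_Algebra"
begin

text \<open>
  Put $u = 2(1-z)/z$. Then $z/(1 - (1 \mp \alpha/2) z) = 2/(u \pm \alpha)$, so summing over the
  zeros and using the logarithmic derivative of $y_n$, the generating function
  $\sum_m (A_m^n - m) z^{m+1}$ equals $-2 (y_n'(u)/y_n(u) + y_n'(-u)/y_n(-u)) - 4/u^2$.
  The Bessel equation $z^2 y'' + 2(z+1) y' = n(n+1) y$ gives the Wronskian-type identity
  $u^2 (y_n'(-u) y_n(u) + y_n'(u) y_n(-u)) + 2 y_n(u) y_n(-u) = 2$, which collapses this to
  $-4/(u^2 P(u))$ with $P(u) = y_n(u) y_n(-u)$.
  The even polynomial $P$ satisfies a fourth-order equation whose coefficients give a two-term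
  recurrence; each coefficient of $P$ is at most $1/(n+1)$ times the next one, so
  $|P(u)| \ge \frac23 \mathrm{lc}(y_n)^2 |u|^{2n}$ as soon as $(n+1)|u|^2 \ge 4$. The hypothesis
  $n + 1 \ge x^2/(1-x)^2$ guarantees this on the circle $|z| = x$, and Cauchy's estimate there
  bounds $|m - A_m^n|$ by three quarters of the claimed right-hand side.
\<close>

section \<open>Bessel polynomials\<close>

definition bessel_coeff :: "nat \<Rightarrow> nat \<Rightarrow> real" where
  "bessel_coeff n k = fact (n+k) / (fact (n-k) * fact k) / 2 ^ k"

lemma coeff_bessel_poly:
  "coeff (bessel_poly n) k = (if k \<le> n then of_real (bessel_coeff n k) else 0)"
  unfolding bessel_poly_def bessel_coeff_def by (simp add: coeff_sum)

lemma bessel_coeff_pos: "k \<le> n \<Longrightarrow> bessel_coeff n k > 0"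
  unfolding bessel_coeff_def by simp

lemma bessel_coeff_Suc:
  assumes "k < n"
  shows "2 * real (Suc k) * bessel_coeff n (Suc k) = real (n+k+1) * real (n-k) * bessel_coeff n k"
proof -
  obtain j where j: "n - k = Suc j" "n - Suc k = j"
    using assms by (metis Suc_diff_Suc)
  show ?thesis
    unfolding bessel_coeff_def j by (simp add: field_simps del: of_nat_Suc)
qed

definition bessel_lead :: "nat \<Rightarrow> real" where
  "bessel_lead n = fact (2*n) / (fact n * 2^n)"

lemma bessel_lead_pos: "bessel_lead n > 0"
  unfolding bessel_lead_def by simp

lemma degree_bessel_poly: "degree (bessel_poly n) = n"
proof (rule antisym)
  show "degree (bessel_poly n) \<le> n"
    by (rule degree_le) (auto simp: coeff_bessel_poly)
  show "n \<le> degree (bessel_poly n)"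
    by (rule le_degree) (use bessel_coeff_pos[of n n] in \<open>auto simp: coeff_bessel_poly\<close>)
qed

lemma lead_coeff_bessel_poly: "lead_coeff (bessel_poly n) = of_real (bessel_lead n)"
  by (simp add: degree_bessel_poly coeff_bessel_poly bessel_coeff_def bessel_lead_def mult_2)

lemma bessel_poly_nonzero: "bessel_poly n \<noteq> 0"
  using lead_coeff_bessel_poly[of n] bessel_lead_pos[of n] by auto

lemma poly_bessel_poly_0: "poly (bessel_poly n) 0 = 1"
  by (simp add: poly_0_coeff_0 coeff_bessel_poly bessel_coeff_def)

lemma bessel_poly_ode:
  "monom 1 2 * pderiv (pderiv (bessel_poly n)) + [:2,2:] * pderiv (bessel_poly n)
     = smult (of_nat (n*(n+1))) (bessel_poly n)"
proof (rule poly_eqI)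
  fix k
  define c where "c = coeff (bessel_poly n)"
  have "of_nat k * (of_nat k - 1) * c k + (2 * of_nat (Suc k) * c (Suc k) + 2 * of_nat k * c k)
        = of_nat (n*(n+1)) * c k"
  proof (cases "k < n")
    case True
    have "2 * of_nat (Suc k) * c (Suc k) = of_real (real (n+k+1) * real (n-k)) * c k"
      using True arg_cong[OF bessel_coeff_Suc[OF True], of complex_of_real]
      by (simp add: c_def coeff_bessel_poly)
    with True show ?thesis
      by (simp add: algebra_simps)
  next
    case False
    then have "c (Suc k) = 0" "k = n \<or> c k = 0"
      by (auto simp: c_def coeff_bessel_poly)
    then show ?thesis
      by (auto simp: algebra_simps)
  qed
  then show "coeff (monom 1 2 * pderiv (pderiv (bessel_poly n)) + [:2,2:] * pderiv (bessel_poly n)) k =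
        coeff (smult (of_nat (n*(n+1))) (bessel_poly n)) k"
    unfolding coeff_add coeff_monom_mult coeff_smult
    by (cases k; cases "k - 1") (auto simp: coeff_pderiv c_def algebra_simps)
qed

lemma poly_bessel_poly_ode:
  fixes v :: complex
  shows "v^2 * poly (pderiv (pderiv (bessel_poly n))) v + (2 + 2 * v) * poly (pderiv (bessel_poly n)) v
     = of_nat (n*(n+1)) * poly (bessel_poly n) v"
  using arg_cong[OF bessel_poly_ode[of n], of "\<lambda>p. poly p v"] by (simp add: poly_monom algebra_simps)

lemma poly_bessel_poly_ode_pderiv:
  fixes v :: complex
  shows "2 * v * poly (pderiv (pderiv (bessel_poly n))) v
     + v^2 * poly (pderiv (pderiv (pderiv (bessel_poly n)))) v
     + 2 * poly (pderiv (bessel_poly n)) v + (2 + 2 * v) * poly (pderiv (pderiv (bessel_poly n))) v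
   = of_nat (n*(n+1)) * poly (pderiv (bessel_poly n)) v"
  using arg_cong[OF bessel_poly_ode[of n], of "\<lambda>p. poly (pderiv p) v"]
  by (simp add: pderiv_add pderiv_mult pderiv_smult poly_monom pderiv_monom pderiv_pCons algebra_simps)

lemma bessel_poly_root_nonzero:
  assumes "poly (bessel_poly n) a = 0"
  shows "a \<noteq> 0" "n \<noteq> 0"
proof -
  show "a \<noteq> 0"
    using assms poly_bessel_poly_0[of n] by auto
  show "n \<noteq> 0"
  proof
    assume "n = 0"
    then have "bessel_poly n = 1"
      by (simp add: bessel_poly_def)
    with assms show False
      by simp
  qed
qed

lemma order_bessel_poly_root:
  assumes root: "poly (bessel_poly n) a = 0"
  shows "order a (bessel_poly n) = 1"
proof (rule ccontr)
  assume "order a (bessel_poly n) \<noteq> 1"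
  define Y where "Y = bessel_poly n"
  have Y: "Y \<noteq> 0" "poly Y a = 0"
    using bessel_poly_nonzero root unfolding Y_def by auto
  have "order a Y \<noteq> 0"
    using Y order_root by blast
  with \<open>order a (bessel_poly n) \<noteq> 1\<close> have "order a Y \<ge> 2"
    unfolding Y_def by linarith
  have ord1: "order a Y = Suc (order a (pderiv Y))"
    by (rule order_pderiv[OF Y])
  have "pderiv Y \<noteq> 0"
    using bessel_poly_root_nonzero(2)[OF root]
    by (simp add: Y_def pderiv_eq_0_iff degree_bessel_poly)
  moreover have "order a (pderiv Y) \<noteq> 0"
    using ord1 \<open>order a Y \<ge> 2\<close> by simp
  ultimately have Y1: "pderiv Y \<noteq> 0" "poly (pderiv Y) a = 0"
    using order_root by blast+
  have ord2: "order a (pderiv Y) = Suc (order a (pderiv (pderiv Y)))"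
    by (rule order_pderiv[OF Y1])
  have Y2: "pderiv (pderiv Y) \<noteq> 0"
  proof
    assume "pderiv (pderiv Y) = 0"
    then obtain c where "pderiv Y = [:c:]"
      using pderiv_iszero by blast
    with Y1 show False
      by simp
  qed
  \<comment> \<open>The factor $(z-a)^{r-1}$ of $Y$ and $Y'$ divides $z^2 Y''$ by the ODE, but $Y''$ has order $r-2$ at $a \<noteq> 0$.\<close>
  define q where "q = [:-a, 1:] ^ (order a Y - 1)"
  have "q dvd Y" "q dvd pderiv Y"
    unfolding q_def order_divides using ord1 by auto
  then have "q dvd smult (of_nat (n*(n+1))) Y - [:2,2:] * pderiv Y"
    by (intro dvd_diff dvd_smult dvd_mult)
  also have "smult (of_nat (n*(n+1))) Y - [:2,2:] * pderiv Y = monom 1 2 * pderiv (pderiv Y)"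
    using bessel_poly_ode[of n] unfolding Y_def by (simp add: algebra_simps)
  finally have "order a Y - 1 \<le> order a (monom 1 2 * pderiv (pderiv Y))"
    using Y2 unfolding q_def order_divides by simp
  also have "order a (monom 1 2) = 0"
    using bessel_poly_root_nonzero(1)[OF root] by (intro order_0I) (simp add: poly_monom)
  then have "order a (monom 1 2 * pderiv (pderiv Y)) = order a (pderiv (pderiv Y))"
    using Y2 order_mult[of "monom 1 2" "pderiv (pderiv Y)" a] by simp
  finally show False
    using ord1 ord2 \<open>order a Y \<ge> 2\<close> by simp
qed

lemma rsquarefree_bessel_poly: "rsquarefree (bessel_poly n)"
  unfolding rsquarefree_def using bessel_poly_nonzero order_bessel_poly_root order_0I by blast

lemma finite_bessel_zeros: "finite (bessel_zeros n)"
  unfolding bessel_zeros_def using poly_roots_finite[OF bessel_poly_nonzero] .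

lemma logderiv_prod_linear:
  fixes S :: "complex set"
  assumes "finite S" "u \<notin> S"
  shows "poly (pderiv (\<Prod>z\<in>S. [:-z,1:])) u / poly (\<Prod>z\<in>S. [:-z,1:]) u = (\<Sum>z\<in>S. 1/(u-z))"
  using assms
proof (induction S rule: finite_induct)
  case (insert z S)
  define G where "G = (\<Prod>z\<in>S. [:-z,1:])"
  have "poly G u \<noteq> 0" "u - z \<noteq> 0"
    using insert unfolding G_def by (auto simp: poly_prod)
  moreover have pd: "pderiv ([:-z,1:] * G) = [:-z,1:] * pderiv G + G"
    by (simp only: pderiv_mult) (simp add: pderiv_pCons)
  ultimately have "poly (pderiv ([:-z,1:] * G)) u / poly ([:-z,1:] * G) u
       = poly (pderiv G) u / poly G u + 1/(u-z)"
    unfolding pd by (simp add: field_simps)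
  then show ?case
    using insert unfolding G_def by (simp add: add.commute)
qed simp

lemma sum_bessel_zeros_inverse:
  assumes "poly (bessel_poly n) u \<noteq> 0"
  shows "(\<Sum>a\<in>bessel_zeros n. 1/(u-a)) = poly (pderiv (bessel_poly n)) u / poly (bessel_poly n) u"
proof -
  define G where "G = (\<Prod>z\<in>bessel_zeros n. [:-z,1:])"
  have decomp: "bessel_poly n = smult (lead_coeff (bessel_poly n)) G"
    unfolding G_def bessel_zeros_def
    by (rule complex_poly_decompose_rsquarefree[OF rsquarefree_bessel_poly, symmetric])
  have "lead_coeff (bessel_poly n) \<noteq> 0"
    using bessel_poly_nonzero by simp
  then have "poly (pderiv (bessel_poly n)) u / poly (bessel_poly n) u = poly (pderiv G) u / poly G u"
    by (subst (1 2) decomp) (simp add: pderiv_smult)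
  also have "\<dots> = (\<Sum>a\<in>bessel_zeros n. 1/(u-a))"
    unfolding G_def using assms
    by (intro logderiv_prod_linear finite_bessel_zeros) (simp add: bessel_zeros_def)
  finally show ?thesis ..
qed

lemma bessel_poly_wronskian:
  fixes u :: complex
  shows "u^2 * (poly (pderiv (bessel_poly n)) (-u) * poly (bessel_poly n) u
             + poly (pderiv (bessel_poly n)) u * poly (bessel_poly n) (-u))
        + 2 * poly (bessel_poly n) u * poly (bessel_poly n) (-u) = 2"
proof -
  define Y where "Y = bessel_poly n"
  define Phi where "Phi = monom 1 2 * (pderiv Y \<circ>\<^sub>p [:0, -1:] * Y + pderiv Y * (Y \<circ>\<^sub>p [:0, -1:]))
      + smult 2 (Y * (Y \<circ>\<^sub>p [:0, -1:]))"
  have poly_Phi: "poly Phi v = v^2 * (poly (pderiv Y) (-v) * poly Y v + poly (pderiv Y) v * poly Y (-v))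
        + 2 * poly Y v * poly Y (-v)" for v
    unfolding Phi_def by (simp add: poly_monom poly_pcompose)
  have "poly (pderiv Phi) v = 0" for v
  proof -
    have "poly (pderiv Phi) v = 2 * v * (poly (pderiv Y) (-v) * poly Y v + poly (pderiv Y) v * poly Y (-v))
        + v^2 * (- poly (pderiv (pderiv Y)) (-v) * poly Y v + poly (pderiv Y) (-v) * poly (pderiv Y) v
                 + poly (pderiv (pderiv Y)) v * poly Y (-v) - poly (pderiv Y) v * poly (pderiv Y) (-v))
        + 2 * (poly (pderiv Y) v * poly Y (-v) - poly Y v * poly (pderiv Y) (-v))"
      unfolding Phi_def
      by (simp add: pderiv_mult pderiv_pcompose pderiv_add pderiv_smult poly_pcompose poly_monom
            pderiv_monom pderiv_pCons algebra_simps)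
    also have "\<dots> = 0"
      using poly_bessel_poly_ode[of v n] poly_bessel_poly_ode[of "-v" n] unfolding Y_def by algebra
    finally show ?thesis .
  qed
  then have "pderiv Phi = 0"
    using poly_eq_poly_eq_iff[of "pderiv Phi" 0] by auto
  then obtain c where "Phi = [:c:]"
    using pderiv_iszero by blast
  then have "poly Phi u = poly Phi 0"
    by simp
  then show ?thesis
    using poly_Phi[of u] poly_Phi[of 0] poly_bessel_poly_0[of n] unfolding Y_def by simp
qed

section \<open>The product $y_n(u)\, y_n(-u)$\<close>

definition bessel_prod :: "nat \<Rightarrow> complex poly" where
  "bessel_prod n = bessel_poly n * (bessel_poly n \<circ>\<^sub>p [:0, -1:])"

lemma poly_bessel_prod: "poly (bessel_prod n) u = poly (bessel_poly n) u * poly (bessel_poly n) (-u)"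
  unfolding bessel_prod_def by (simp add: poly_pcompose)

lemma bessel_prod_ode:
  fixes n :: nat
  defines "P \<equiv> bessel_prod n" and "K \<equiv> of_nat ((2*n+1)^2) :: complex"
  shows "smult 4 (pderiv P) + smult (K-1) (monom 1 1 * P) + smult (K-7) (monom 1 2 * pderiv P)
     = smult 6 (monom 1 3 * pderiv (pderiv P)) + monom 1 4 * pderiv (pderiv (pderiv P))"
  (is "?L = ?R")
proof -
  define Y where "Y = bessel_poly n"
  define N where "N = (of_nat (n*(n+1)) :: complex)"
  have ode: "u^2 * poly (pderiv (pderiv Y)) u + (2 + 2 * u) * poly (pderiv Y) u = N * poly Y u"
    for u :: complex
    unfolding Y_def N_def by (rule poly_bessel_poly_ode)
  have ode': "2 * u * poly (pderiv (pderiv Y)) u + u^2 * poly (pderiv (pderiv (pderiv Y))) u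
      + 2 * poly (pderiv Y) u + (2 + 2 * u) * poly (pderiv (pderiv Y)) u = N * poly (pderiv Y) u"
    for u :: complex
    unfolding Y_def N_def by (rule poly_bessel_poly_ode_pderiv)
  have K: "K = 4 * N + 1"
    unfolding K_def N_def by (simp add: power2_eq_square algebra_simps)
  have "poly (?L - ?R) v = 0" for v
    unfolding P_def bessel_prod_def K Y_def[symmetric]
    using ode[of v] ode[of "-v"] ode'[of v] ode'[of "-v"]
    apply (simp add: pderiv_mult pderiv_pcompose pderiv_add pderiv_smult pderiv_diff poly_pcompose
        poly_monom pderiv_monom pderiv_pCons)
    by algebra
  then show ?thesis
    using poly_eq_poly_eq_iff[of "?L - ?R" 0] by auto
qed

lemma coeff_bessel_prod_rec:
  "of_nat (4*(m+2)) * coeff (bessel_prod n) (m+2)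
     = - (of_nat (m+1) * (of_nat ((2*n+1)^2) - of_nat ((m+1)^2))) * coeff (bessel_prod n) m"
proof -
  define P where "P = bessel_prod n"
  define K where "K = (of_nat ((2*n+1)^2) :: complex)"
  have "coeff (smult 4 (pderiv P) + smult (K-1) (monom 1 1 * P) + smult (K-7) (monom 1 2 * pderiv P)
      - smult 6 (monom 1 3 * pderiv (pderiv P)) - monom 1 4 * pderiv (pderiv (pderiv P))) (Suc m) = 0"
    unfolding P_def K_def by (simp only: bessel_prod_ode diff_diff_eq diff_self coeff_0)
  moreover have "coeff (smult 4 (pderiv P) + smult (K-1) (monom 1 1 * P) + smult (K-7) (monom 1 2 * pderiv P)
      - smult 6 (monom 1 3 * pderiv (pderiv P)) - monom 1 4 * pderiv (pderiv (pderiv P))) (Suc m)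
    = 4 * of_nat (m+2) * coeff P (m+2) + (K-1) * coeff P m + (K-7) * of_nat m * coeff P m
        - 6 * (of_nat m * (of_nat m - 1)) * coeff P m
        - of_nat m * (of_nat m - 1) * (of_nat m - 2) * coeff P m"
  proof -
    consider "m = 0" | "m = 1" | "m = 2" | j where "m = Suc (Suc (Suc j))"
      by (metis One_nat_def Suc_1 not0_implies_Suc)
    then show ?thesis
      by cases (simp_all only: coeff_add coeff_diff coeff_smult coeff_monom_mult,
                auto simp: coeff_pderiv algebra_simps numeral_eq_Suc)
  qed
  ultimately show ?thesis
    unfolding P_def K_def by (simp add: algebra_simps power2_eq_square)
qed

lemma coeff_bessel_prod_1: "coeff (bessel_prod n) 1 = 0"
  using arg_cong[OF bessel_prod_ode[of n], of "\<lambda>p. coeff p 0"]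
  by (simp add: coeff_monom_mult coeff_pderiv)

lemma coeff_bessel_prod_odd: "coeff (bessel_prod n) (Suc (2*k)) = 0"
proof (induction k)
  case 0
  then show ?case
    using coeff_bessel_prod_1 by simp
next
  case (Suc k)
  have "of_nat (4*(2*k+3)) * coeff (bessel_prod n) (2*k+3) = 0"
    using coeff_bessel_prod_rec[of "2*k+1" n] Suc.IH by (simp add: numeral_eq_Suc)
  moreover have "of_nat (4*(2*k+3)) \<noteq> (0::complex)"
    by (simp only: of_nat_eq_0_iff) simp
  ultimately have "coeff (bessel_prod n) (2*k+3) = 0"
    by (simp only: mult_eq_0_iff) blast
  then show ?case
    by (simp add: numeral_eq_Suc)
qed

lemma degree_bessel_prod: "degree (bessel_prod n) = 2*n"
  unfolding bessel_prod_def using bessel_poly_nonzero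
  by (subst degree_mult_eq) (auto simp: degree_pcompose degree_bessel_poly pcompose_eq_0_iff)

lemma norm_lead_coeff_bessel_prod: "norm (coeff (bessel_prod n) (2*n)) = (bessel_lead n)^2"
proof -
  have "lead_coeff (bessel_prod n) = lead_coeff (bessel_poly n) * (lead_coeff (bessel_poly n) * (-1)^n)"
    unfolding bessel_prod_def lead_coeff_mult by (subst lead_coeff_comp) (auto simp: degree_bessel_poly)
  then show ?thesis
    using bessel_lead_pos[of n]
    by (simp add: degree_bessel_prod lead_coeff_bessel_poly norm_mult norm_power power2_eq_square)
qed

lemma coeff_ratio_ineq:
  fixes k n :: nat
  assumes "k < n" "2 \<le> n"
  shows "2*(k+1)*(n+1) \<le> (2*k+1)*(n-k)*(n+k+1)"
proof (cases "n = k+1")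
  case True
  then obtain j where "k = Suc j"
    using assms(2) by (cases k) auto
  with True show ?thesis
    by (simp add: algebra_simps)
next
  case False
  then have "n - k \<ge> 2"
    using assms(1) by simp
  have "2*(k+1)*(n+1) = (k+1)*2*(n+1)"
    by simp
  also have "\<dots> \<le> (2*k+1)*(n-k)*(n+k+1)"
    by (intro mult_mono) (use \<open>n - k \<ge> 2\<close> in auto)
  finally show ?thesis .
qed

lemma norm_coeff_bessel_prod_step:
  assumes "k < n" "2 \<le> n"
  shows "norm (coeff (bessel_prod n) (2*k)) \<le> norm (coeff (bessel_prod n) (2*k+2)) / real (n+1)"
proof -
  define c where "c i = norm (coeff (bessel_prod n) i)" for i
  define D where "D = (2*k+1) * (4*(n-k)*(n+k+1))"
  have "(2*k+1)^2 \<le> (2*n+1)^2"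
    using assms(1) by (simp add: power_mono)
  moreover have "(2*n+1)^2 - (2*k+1)^2 = 4*(n-k)*(n+k+1)"
    using assms(1) by (simp add: power2_eq_square algebra_simps diff_mult_distrib diff_mult_distrib2)
  ultimately have "of_nat ((2*n+1)^2) - of_nat ((2*k+1)^2) = (of_nat (4*(n-k)*(n+k+1)) :: complex)"
    by (metis of_nat_diff)
  with coeff_bessel_prod_rec[of "2*k" n]
  have "of_nat (4*(2*k+2)) * coeff (bessel_prod n) (2*k+2) = - (of_nat D * coeff (bessel_prod n) (2*k))"
    unfolding D_def of_nat_mult[of "2*k+1"] by simp
  from arg_cong[OF this, of norm] have eq: "real (4*(2*k+2)) * c (2*k+2) = real D * c (2*k)"
    unfolding c_def norm_mult norm_minus_cancel norm_of_nat .
  have "2*(k+1)*(n+1) \<le> (2*k+1)*(n-k)*(n+k+1)"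
    using assms by (rule coeff_ratio_ineq)
  moreover have "4*(2*k+2)*(n+1) = 4*(2*(k+1)*(n+1))"
    by (simp add: algebra_simps)
  moreover have "D = 4*((2*k+1)*(n-k)*(n+k+1))"
    unfolding D_def by (simp only: mult.assoc mult.left_commute)
  ultimately have "4*(2*k+2)*(n+1) \<le> D"
    by simp
  have "real D * (real (n+1) * c (2*k)) = real (n+1) * (real (4*(2*k+2)) * c (2*k+2))"
    unfolding eq by (simp only: mult.left_commute)
  also have "\<dots> = real (4*(2*k+2)*(n+1)) * c (2*k+2)"
    by (simp only: of_nat_mult mult_ac)
  also have "\<dots> \<le> real D * c (2*k+2)"
    using \<open>4*(2*k+2)*(n+1) \<le> D\<close> by (intro mult_right_mono) (simp_all only: of_nat_le_iff c_def norm_ge_zero)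
  finally have "real D * (real (n+1) * c (2*k)) \<le> real D * c (2*k+2)" .
  moreover have "real D > 0"
    using assms(1) unfolding D_def by (simp only: of_nat_0_less_iff) simp
  ultimately have "real (n+1) * c (2*k) \<le> c (2*k+2)"
    by (rule mult_left_le_imp_le)
  then show ?thesis
    unfolding c_def by (simp add: field_simps)
qed

lemma norm_coeff_bessel_prod_le:
  assumes "j \<le> n" "2 \<le> n"
  shows "norm (coeff (bessel_prod n) (2*(n-j))) \<le> (bessel_lead n)^2 / real (n+1)^j"
  using assms(1)
proof (induction j)
  case 0
  then show ?case
    using norm_lead_coeff_bessel_prod[of n] by simp
next
  case (Suc j)
  have "2*(n - Suc j) + 2 = 2*(n-j)"
    using Suc.prems by simp
  then have "norm (coeff (bessel_prod n) (2*(n - Suc j))) \<le> norm (coeff (bessel_prod n) (2*(n-j))) / real (n+1)"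
    using norm_coeff_bessel_prod_step[of "n - Suc j" n] Suc.prems assms(2) by simp
  also have "\<dots> \<le> ((bessel_lead n)^2 / real (n+1)^j) / real (n+1)"
    using Suc.IH Suc.prems by (intro divide_right_mono) auto
  finally show ?case
    by (simp add: mult.commute)
qed

lemma sum_lessThan_double:
  fixes f :: "nat \<Rightarrow> 'a::comm_monoid_add"
  shows "(\<Sum>i<2*n. f i) = (\<Sum>k<n. f (2*k) + f (2*k+1))"
  by (induction n) (simp_all add: ac_simps)

lemma sum_power_Suc_le:
  fixes r :: real
  assumes "0 \<le> r" "r < 1"
  shows "(\<Sum>i<n. r ^ Suc i) \<le> r / (1-r)"
proof -
  have "(\<Sum>i<n. r ^ Suc i) = r * ((1 - r^n) / (1-r))"
    using assms by (simp add: sum_distrib_left[symmetric] sum_gp_strict)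
  also have "\<dots> \<le> r * (1 / (1-r))"
    using assms by (intro mult_left_mono divide_right_mono) auto
  finally show ?thesis
    by simp
qed

lemma poly_bessel_prod_top_split:
  "poly (bessel_prod n) u = (\<Sum>j<n. coeff (bessel_prod n) (2*(n - Suc j)) * u^(2*(n - Suc j)))
     + coeff (bessel_prod n) (2*n) * u^(2*n)"
proof -
  define c where "c = coeff (bessel_prod n)"
  have "poly (bessel_prod n) u = (\<Sum>i<2*n. c i * u^i) + c (2*n) * u^(2*n)"
    by (simp add: c_def poly_altdef degree_bessel_prod lessThan_Suc_atMost[symmetric])
  also have "(\<Sum>i<2*n. c i * u^i) = (\<Sum>k<n. c (2*k) * u^(2*k))"
    unfolding sum_lessThan_double by (simp add: c_def coeff_bessel_prod_odd)
  also have "\<dots> = (\<Sum>j<n. c (2*(n - Suc j)) * u^(2*(n - Suc j)))"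
    by (rule sum.nat_diff_reindex[symmetric])
  finally show ?thesis
    unfolding c_def .
qed

lemma norm_poly_bessel_prod_ge:
  fixes u :: complex
  assumes "2 \<le> n" "u \<noteq> 0" and r: "r = 1 / (real (n+1) * norm u ^ 2)" "r < 1"
  shows "(bessel_lead n)^2 * norm u^(2*n) * (1 - r/(1-r)) \<le> norm (poly (bessel_prod n) u)"
proof -
  define c where "c = coeff (bessel_prod n)"
  define L where "L = (bessel_lead n)^2"
  note split = poly_bessel_prod_top_split[of n u, folded c_def]
  \<comment> \<open>The $j$-th coefficient below the top one is at most $L/(n+1)^j$, so the tail is geometric in $r$.\<close>
  have "norm (\<Sum>j<n. c (2*(n - Suc j)) * u^(2*(n - Suc j)))
      \<le> (\<Sum>j<n. L / real (n+1) ^ Suc j * norm u ^ (2*(n - Suc j)))"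
  proof (intro order_trans[OF norm_sum] sum_mono)
    fix j assume "j \<in> {..<n}"
    then have "norm (c (2*(n - Suc j))) \<le> L / real (n+1) ^ Suc j"
      using norm_coeff_bessel_prod_le[of "Suc j" n] assms(1) unfolding c_def L_def by simp
    then show "norm (c (2*(n - Suc j)) * u^(2*(n - Suc j))) \<le> L / real (n+1) ^ Suc j * norm u ^ (2*(n - Suc j))"
      unfolding norm_mult norm_power by (rule mult_right_mono) simp
  qed
  also have "\<dots> = (\<Sum>j<n. L * norm u^(2*n) * r ^ Suc j)"
  proof (intro sum.cong refl)
    fix j assume "j \<in> {..<n}"
    then have "2*n = 2*(n - Suc j) + 2 * Suc j"
      by simp
    then have pow: "norm u^(2*n) = norm u^(2*(n - Suc j)) * (norm u^2)^Suc j"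
      by (metis power_add power_mult)
    have r_pow: "r ^ Suc j = 1 / (real (n+1) ^ Suc j * (norm u^2) ^ Suc j)"
      unfolding r by (simp add: power_mult_distrib power_divide)
    have "\<And>a b w :: real. a > 0 \<Longrightarrow> b > 0 \<Longrightarrow> L / a * w = L * (w * b) * (1 / (a * b))"
      by (simp add: field_simps)
    then show "L / real (n+1) ^ Suc j * norm u ^ (2*(n - Suc j)) = L * norm u^(2*n) * r ^ Suc j"
      unfolding pow r_pow using assms(2) by simp
  qed
  also have "\<dots> = L * norm u^(2*n) * (\<Sum>j<n. r ^ Suc j)"
    by (simp only: sum_distrib_left)
  also have "\<dots> \<le> L * norm u^(2*n) * (r/(1-r))"
    using r by (intro mult_left_mono sum_power_Suc_le) (auto simp: L_def)
  finally have tail: "norm (\<Sum>j<n. c (2*(n - Suc j)) * u^(2*(n - Suc j))) \<le> L * norm u^(2*n) * (r/(1-r))" .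
  have "norm (c (2*n) * u^(2*n)) = L * norm u^(2*n)"
    by (simp add: c_def L_def norm_mult norm_power norm_lead_coeff_bessel_prod)
  then show ?thesis
    using tail norm_triangle_ineq2[of "c (2*n) * u^(2*n)" "poly (bessel_prod n) u"]
    unfolding split L_def[symmetric] by (simp add: algebra_simps norm_minus_commute)
qed

lemma poly_bessel_prod_nonzero:
  fixes u :: complex
  assumes "2 \<le> n" "u \<noteq> 0" "real (n+1) * norm u ^ 2 \<ge> 3"
  shows "poly (bessel_prod n) u \<noteq> 0"
proof -
  define r where "r = 1 / (real (n+1) * norm u ^ 2)"
  have "0 < r" "r \<le> 1/3"
    unfolding r_def using assms by (auto simp: field_simps)
  then have "0 < (bessel_lead n)^2 * norm u^(2*n) * (1 - r/(1-r))"
    using assms(2) bessel_lead_pos[of n] by (simp add: field_simps)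
  also have "\<dots> \<le> norm (poly (bessel_prod n) u)"
    using \<open>r \<le> 1/3\<close> by (intro norm_poly_bessel_prod_ge[OF assms(1,2) r_def]) simp
  finally show ?thesis
    by simp
qed

lemma norm_poly_bessel_prod_ge_two_thirds:
  fixes u :: complex
  assumes "2 \<le> n" "u \<noteq> 0" "real (n+1) * norm u ^ 2 \<ge> 4"
  shows "(bessel_lead n)^2 * norm u^(2*n) * (2/3) \<le> norm (poly (bessel_prod n) u)"
proof -
  define r where "r = 1 / (real (n+1) * norm u ^ 2)"
  have "0 < r" "r \<le> 1/4"
    unfolding r_def using assms by (auto simp: field_simps)
  then have "(bessel_lead n)^2 * norm u^(2*n) * (2/3) \<le> (bessel_lead n)^2 * norm u^(2*n) * (1 - r/(1-r))"
    by (intro mult_left_mono) (auto simp: field_simps)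
  also have "\<dots> \<le> norm (poly (bessel_prod n) u)"
    using \<open>r \<le> 1/4\<close> by (intro norm_poly_bessel_prod_ge[OF assms(1,2) r_def]) simp
  finally show ?thesis .
qed

section \<open>The generating function\<close>

text \<open>$z^{2n} P(2(1-z)/z)$, written so that it visibly extends to $z = 0$.\<close>

definition bessel_denom :: "nat \<Rightarrow> complex \<Rightarrow> complex" where
  "bessel_denom n z = (\<Sum>i\<le>2*n. coeff (bessel_prod n) i * (2*(1-z))^i * z^(2*n-i))"

text \<open>Closed form of $\sum_m (A_m^n - m) z^{m+1}$, see \<open>bessel_gf_sums\<close>.\<close>

definition bessel_gf :: "nat \<Rightarrow> complex \<Rightarrow> complex" where
  "bessel_gf n z = -(z^(2*n+2)) / ((1-z)^2 * bessel_denom n z)"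

lemma bessel_denom_eq:
  assumes "z \<noteq> 0"
  shows "bessel_denom n z = z^(2*n) * poly (bessel_prod n) (2*(1-z)/z)"
proof -
  have "z^(2*n) * poly (bessel_prod n) (2*(1-z)/z)
      = (\<Sum>i\<le>2*n. coeff (bessel_prod n) i * (z^(2*n) * (2*(1-z)/z)^i))"
    by (simp add: poly_altdef degree_bessel_prod sum_distrib_left algebra_simps)
  also have "\<dots> = bessel_denom n z"
    unfolding bessel_denom_def
  proof (intro sum.cong refl)
    fix i assume "i \<in> {..2*n}"
    then have "z^(2*n) = z^i * z^(2*n-i)"
      by (simp add: power_add[symmetric])
    then show "coeff (bessel_prod n) i * (z^(2*n) * (2*(1-z)/z)^i) = coeff (bessel_prod n) i * (2*(1-z))^i * z^(2*n-i)"
      using assms by (simp add: power_divide field_simps)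
  qed
  finally show ?thesis ..
qed

lemma bessel_denom_0_nonzero: "bessel_denom n 0 \<noteq> 0"
proof -
  have "bessel_denom n 0 = coeff (bessel_prod n) (2*n) * 2^(2*n)"
    unfolding bessel_denom_def by (subst sum.remove[of _ "2*n"]) (auto intro!: sum.neutral)
  then show ?thesis
    using norm_lead_coeff_bessel_prod[of n] bessel_lead_pos[of n] by auto
qed

lemma bessel_gf_eq:
  assumes "z \<noteq> 0" "z \<noteq> 1"
  shows "bessel_gf n z = -4 / ((2*(1-z)/z)^2 * poly (bessel_prod n) (2*(1-z)/z))"
proof -
  define P where "P = poly (bessel_prod n) (2*(1-z)/z)"
  have "bessel_gf n z = -(z^(2*n) * z^2) / ((1-z)^2 * (z^(2*n) * P))"
    unfolding bessel_gf_def bessel_denom_eq[OF assms(1)] P_def power_add ..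
  also have "\<dots> = -(z^2) / ((1-z)^2 * P)"
    using assms(1) by (simp add: field_simps)
  also have "\<dots> = -4 / ((2*(1-z)/z)^2 * P)"
  proof (cases "P = 0")
    case False
    then have "(1-z)^2 * P \<noteq> 0"
      using assms(2) by simp
    moreover have "(2*(1-z)/z)^2 * P = 4 * ((1-z)^2 * P) / z^2"
      by (simp add: power_divide power2_eq_square algebra_simps)
    ultimately show ?thesis
      using assms(1) by (simp add: field_simps)
  qed simp
  finally show ?thesis
    unfolding P_def .
qed

lemma norm_bessel_subst_ge:
  fixes z :: complex
  assumes "z \<noteq> 0" "norm z \<le> t"
  shows "2*(1-t)/t \<le> norm (2*(1-z)/z)"
proof -
  have "0 < norm z"
    using assms(1) by simp
  then have "0 < t"
    using assms(2) by linarith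
  then have "2*(1-t)/t = 2/t - 2"
    by (simp add: field_simps)
  also have "\<dots> \<le> 2/norm z - 2"
    using assms \<open>0 < norm z\<close> by (simp add: frac_le)
  also have "\<dots> = 2*(1 - norm z)/norm z"
    using assms by (simp add: field_simps)
  also have "\<dots> \<le> 2 * norm (1-z) / norm z"
    using norm_triangle_ineq2[of 1 z] by (intro divide_right_mono mult_left_mono) auto
  also have "\<dots> = norm (2*(1-z)/z)"
    unfolding norm_divide norm_mult by simp
  finally show ?thesis .
qed

text \<open>Cauchy's estimate on $|z| = x$ needs holomorphy on a larger disc; on $|z| < 10x/(9+x)$ one
  still has $(n+1)|u|^2 \ge 81/25$.\<close>

lemma bessel_denom_nonzero:
  fixes x :: real and z :: complex
  assumes x: "0 < x" "x < 1" "x^2 \<le> real (n+1) * (1-x)^2" and "2 \<le> n"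
    and z: "norm z < 10*x/(9+x)"
  shows "bessel_denom n z \<noteq> 0"
proof (cases "z = 0")
  case False
  define t where "t = 10*x/(9+x)"
  have "0 < 9 + x"
    using x by simp
  then have "0 < t" "t < 1" "t * (9 + x) = 10 * x"
    using x unfolding t_def by (simp_all add: field_simps)
  then have "2*(1-t)/t = 9*(1-x)/(5*x)"
    using x by (simp add: field_simps)
  moreover have "norm z \<le> t"
    using z unfolding t_def by simp
  ultimately have "9*(1-x)/(5*x) \<le> norm (2*(1-z)/z)"
    using norm_bessel_subst_ge[OF False] by metis
  have "3 \<le> (81/25) * x^2 / x^2"
    using x by simp
  also have "\<dots> \<le> (81/25) * (real (n+1) * (1-x)^2) / x^2"
    using x by (intro divide_right_mono mult_left_mono) auto
  also have "\<dots> = real (n+1) * (9*(1-x)/(5*x))^2"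
    using x by (simp add: field_simps power2_eq_square)
  also have "\<dots> \<le> real (n+1) * norm (2*(1-z)/z) ^ 2"
    using \<open>9*(1-x)/(5*x) \<le> norm (2*(1-z)/z)\<close> x by (intro mult_left_mono power_mono) auto
  finally have "3 \<le> real (n+1) * norm (2*(1-z)/z) ^ 2" .
  then have "poly (bessel_prod n) (2*(1-z)/z) \<noteq> 0"
    using \<open>t < 1\<close> z False unfolding t_def
    by (intro poly_bessel_prod_nonzero \<open>2 \<le> n\<close>) auto
  then show ?thesis
    using False by (simp add: bessel_denom_eq)
qed (simp add: bessel_denom_0_nonzero)

lemma bessel_gf_holomorphic:
  fixes x :: real
  assumes "0 < x" "x < 1" "x^2 \<le> real (n+1) * (1-x)^2" "2 \<le> n"
  shows "bessel_gf n holomorphic_on ball 0 (10*x/(9+x))"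
proof -
  have "10*x/(9+x) < 1"
    using assms by (simp add: field_simps)
  then have "(1-z)^2 * bessel_denom n z \<noteq> 0" if "z \<in> ball 0 (10*x/(9+x))" for z
    using that bessel_denom_nonzero[OF assms, of z] by auto
  then show ?thesis
    unfolding bessel_gf_def[abs_def] bessel_denom_def by (intro holomorphic_intros) auto
qed

lemma norm_bessel_gf_le:
  fixes x :: real and z :: complex
  assumes x: "0 < x" "x < 1" "x^2 \<le> real (n+1) * (1-x)^2" and "2 \<le> n" and z: "norm z = x"
  shows "norm (bessel_gf n z) \<le> 6 / ((bessel_lead n)^2 * (2*(1-x)/x)^(2*n+2))"
proof -
  define u where "u = 2*(1-z)/z"
  define b where "b = 2*(1-x)/x"
  define L where "L = (bessel_lead n)^2"
  have "z \<noteq> 0" "z \<noteq> 1"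
    using z x by auto
  then have "u \<noteq> 0"
    unfolding u_def by simp
  have "0 < b" "0 < L"
    unfolding b_def L_def using x bessel_lead_pos[of n] by simp_all
  have "b \<le> norm u"
    unfolding u_def b_def using norm_bessel_subst_ge[OF \<open>z \<noteq> 0\<close>] z by simp
  have "4 \<le> 4 * (real (n+1) * (1-x)^2) / x^2"
    using x by (simp add: field_simps)
  also have "\<dots> = real (n+1) * b^2"
    unfolding b_def by (simp add: field_simps power2_eq_square)
  also have "\<dots> \<le> real (n+1) * norm u ^ 2"
    using \<open>0 < b\<close> \<open>b \<le> norm u\<close> by (intro mult_left_mono power_mono) auto
  finally have "4 \<le> real (n+1) * norm u ^ 2" .
  then have P: "L * norm u^(2*n) * (2/3) \<le> norm (poly (bessel_prod n) u)"
    unfolding L_def by (rule norm_poly_bessel_prod_ge_two_thirds[OF \<open>2 \<le> n\<close> \<open>u \<noteq> 0\<close>])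
  have "norm (bessel_gf n z) = 4 / (norm u ^ 2 * norm (poly (bessel_prod n) u))"
    unfolding bessel_gf_eq[OF \<open>z \<noteq> 0\<close> \<open>z \<noteq> 1\<close>] u_def[symmetric]
    by (simp add: norm_divide norm_mult norm_power)
  also have "\<dots> \<le> 4 / (norm u ^ 2 * (L * norm u^(2*n) * (2/3)))"
  proof (rule divide_left_mono)
    show le: "norm u ^ 2 * (L * norm u^(2*n) * (2/3)) \<le> norm u ^ 2 * norm (poly (bessel_prod n) u)"
      using P by (rule mult_left_mono) simp
    have "0 < norm u ^ 2 * (L * norm u^(2*n) * (2/3))"
      using \<open>u \<noteq> 0\<close> \<open>0 < L\<close> by simp
    with le show "0 < norm u ^ 2 * norm (poly (bessel_prod n) u) * (norm u ^ 2 * (L * norm u^(2*n) * (2/3)))"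
      by (metis less_le_trans mult_pos_pos)
  qed simp
  also have "\<dots> = 6 / (L * norm u^(2*n+2))"
    by (simp add: field_simps power_add power2_eq_square)
  also have "\<dots> \<le> 6 / (L * b^(2*n+2))"
    using \<open>0 < L\<close> \<open>0 < b\<close> \<open>b \<le> norm u\<close> \<open>u \<noteq> 0\<close> by (intro divide_left_mono mult_left_mono power_mono mult_pos_pos) auto
  finally show ?thesis
    unfolding L_def b_def .
qed

lemma bessel_gf_partial_fractions:
  fixes z :: complex
  assumes "z \<noteq> 0" "z \<noteq> 1" and P: "poly (bessel_prod n) (2*(1-z)/z) \<noteq> 0"
  shows "(\<Sum>a\<in>bessel_zeros n. z/(1-(1-a/2)*z) - z/(1-(1+a/2)*z)) - z^2/(1-z)^2 = bessel_gf n z"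
proof -
  define Y where "Y = bessel_poly n"
  define u where "u = 2*(1-z)/z"
  have "poly Y u \<noteq> 0" "poly Y (-u) \<noteq> 0" "u \<noteq> 0"
    using P assms unfolding poly_bessel_prod u_def[symmetric] Y_def by (auto simp: u_def)
  have zu: "z * u = 2*(1-z)"
    unfolding u_def using assms(1) by simp
  have cancel: "z/(z*w/2) = 2/w" for w
    using mult_divide_mult_cancel_left[OF assms(1), of 2 w] by simp
  have "z/(1-(1-a/2)*z) - z/(1-(1+a/2)*z) = -2 * (1/(-u-a)) - 2 * (1/(u-a))" for a
  proof -
    have denoms: "1-(1-a/2)*z = z*(u+a)/2" "1-(1+a/2)*z = z*(u-a)/2"
      using zu by (simp_all add: algebra_simps)
    have "-u-a = -(u+a)"
      by simp
    then have "2/(u+a) = -2 * (1/(-u-a))"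
      by (simp only: divide_minus_right) simp
    then show ?thesis
      unfolding denoms cancel by simp
  qed
  then have "(\<Sum>a\<in>bessel_zeros n. z/(1-(1-a/2)*z) - z/(1-(1+a/2)*z))
      = -2 * (\<Sum>a\<in>bessel_zeros n. 1/(-u-a)) - 2 * (\<Sum>a\<in>bessel_zeros n. 1/(u-a))"
    by (simp add: sum_subtractf sum_distrib_left)
  also have "\<dots> = -2 * (poly (pderiv Y) (-u) / poly Y (-u)) - 2 * (poly (pderiv Y) u / poly Y u)"
    using sum_bessel_zeros_inverse[of n u] sum_bessel_zeros_inverse[of n "-u"]
      \<open>poly Y u \<noteq> 0\<close> \<open>poly Y (-u) \<noteq> 0\<close> unfolding Y_def by simp
  finally have sum: "(\<Sum>a\<in>bessel_zeros n. z/(1-(1-a/2)*z) - z/(1-(1+a/2)*z))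
      = -2 * (poly (pderiv Y) (-u) / poly Y (-u)) - 2 * (poly (pderiv Y) u / poly Y u)" .
  have "u^2 = 4*(1-z)^2/z^2"
    unfolding u_def by (simp add: power_divide power2_eq_square algebra_simps)
  then have Z: "z^2/(1-z)^2 = 4/u^2"
    using assms(1,2) \<open>u \<noteq> 0\<close> by (simp add: field_simps)
  have H: "bessel_gf n z = -4 / (u^2 * (poly Y u * poly Y (-u)))"
    unfolding bessel_gf_eq[OF assms(1,2)] u_def[symmetric] poly_bessel_prod Y_def ..
  have W: "u^2 * (poly (pderiv Y) (-u) * poly Y u + poly (pderiv Y) u * poly Y (-u))
        + 2 * poly Y u * poly Y (-u) = 2"
    unfolding Y_def by (rule bessel_poly_wronskian)
  have "-2 * (poly (pderiv Y) (-u) / poly Y (-u)) - 2 * (poly (pderiv Y) u / poly Y u) - 4/u^2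
      = -2 * (u^2 * (poly (pderiv Y) (-u) * poly Y u + poly (pderiv Y) u * poly Y (-u))
        + 2 * poly Y u * poly Y (-u)) / (u^2 * (poly Y u * poly Y (-u)))"
    using \<open>poly Y u \<noteq> 0\<close> \<open>poly Y (-u) \<noteq> 0\<close> \<open>u \<noteq> 0\<close> by (simp add: field_simps power2_eq_square)
  then show ?thesis
    unfolding sum Z H W by simp
qed

section \<open>Power series and Cauchy's estimate\<close>

definition bessel_gf_coeff :: "nat \<Rightarrow> nat \<Rightarrow> complex" where
  "bessel_gf_coeff n j = (case j of 0 \<Rightarrow> 0 | Suc m \<Rightarrow> A_bessel m n - of_nat m)"

text \<open>A crude bound on all $|1 \pm \alpha/2|$; it only has to fix some disc around $0$ on which
  the geometric series in \<open>bessel_gf_sums\<close> converge.\<close>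

definition bessel_zeros_bound :: "nat \<Rightarrow> real" where
  "bessel_zeros_bound n = (\<Sum>a\<in>bessel_zeros n. norm (1-a/2) + norm (1+a/2))"

lemma bessel_zeros_bound_nonneg: "0 \<le> bessel_zeros_bound n"
  unfolding bessel_zeros_bound_def by (intro sum_nonneg) auto

lemma norm_le_bessel_zeros_bound:
  assumes "a \<in> bessel_zeros n"
  shows "norm (1-a/2) \<le> bessel_zeros_bound n" "norm (1+a/2) \<le> bessel_zeros_bound n"
proof -
  have "norm (1-a/2) + norm (1+a/2) \<le> bessel_zeros_bound n"
    unfolding bessel_zeros_bound_def by (rule member_le_sum[OF assms]) (auto simp: finite_bessel_zeros)
  then show "norm (1-a/2) \<le> bessel_zeros_bound n" "norm (1+a/2) \<le> bessel_zeros_bound n"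
    using norm_ge_zero[of "1-a/2"] norm_ge_zero[of "1+a/2"] by linarith+
qed

lemma bessel_gf_sums:
  fixes z :: complex
  assumes "z \<noteq> 0" "norm z < 1" "norm z * (1 + bessel_zeros_bound n) < 1"
    and "poly (bessel_prod n) (2*(1-z)/z) \<noteq> 0"
  shows "(\<lambda>j. bessel_gf_coeff n j * z^j) sums bessel_gf n z"
proof -
  have geom: "(\<lambda>k. c^k * z^(k+1)) sums (z/(1-c*z))" if "norm c \<le> bessel_zeros_bound n" for c
  proof -
    have "norm (c*z) \<le> bessel_zeros_bound n * norm z"
      using that by (simp add: norm_mult mult_right_mono)
    also have "\<dots> = norm z * (1 + bessel_zeros_bound n) - norm z"
      by (simp add: algebra_simps)
    also have "\<dots> < 1"
      using assms(3) norm_ge_zero[of z] by linarith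
    finally have "(\<lambda>k. (c*z)^k) sums (1/(1-c*z))"
      by (rule geometric_sums)
    from sums_mult[OF this, of z] show ?thesis
      by (simp add: power_mult_distrib algebra_simps)
  qed
  have "(\<lambda>k. of_nat (Suc k) * z^k) sums (1/(1-z)^2)"
    by (rule geometric_deriv_sums[OF assms(2)])
  from sums_mult[OF this, of "z^2"]
  have "(\<lambda>k. (\<lambda>k. of_nat k * z^(k+1)) (Suc k)) sums (z^2/(1-z)^2)"
    by (simp add: algebra_simps power2_eq_square)
  then have "(\<lambda>k. of_nat k * z^(k+1)) sums (z^2/(1-z)^2)"
    by (subst (asm) sums_Suc_iff) simp
  then have "(\<lambda>k. (\<Sum>a\<in>bessel_zeros n. (1-a/2)^k * z^(k+1) - (1+a/2)^k * z^(k+1)) - of_nat k * z^(k+1))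
      sums ((\<Sum>a\<in>bessel_zeros n. z/(1-(1-a/2)*z) - z/(1-(1+a/2)*z)) - z^2/(1-z)^2)"
    by (intro sums_diff sums_sum geom) (auto dest: norm_le_bessel_zeros_bound)
  also have "\<dots> = bessel_gf n z"
    using assms by (intro bessel_gf_partial_fractions) auto
  also have "(\<lambda>k. (\<Sum>a\<in>bessel_zeros n. (1-a/2)^k * z^(k+1) - (1+a/2)^k * z^(k+1)) - of_nat k * z^(k+1))
      = (\<lambda>k. bessel_gf_coeff n (Suc k) * z^Suc k)"
    by (simp add: bessel_gf_coeff_def A_bessel_def sum_distrib_right left_diff_distrib)
  finally show ?thesis
    by (subst (asm) sums_Suc_iff) (simp add: bessel_gf_coeff_def)
qed

lemma bessel_gf_has_fps_expansion:
  fixes x :: real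
  assumes "0 < x" "x < 1" "x^2 \<le> real (n+1) * (1-x)^2" "2 \<le> n"
  shows "bessel_gf n has_fps_expansion Abs_fps (bessel_gf_coeff n)"
proof -
  define \<epsilon> where "\<epsilon> = min x (1 / (1 + bessel_zeros_bound n))"
  have "0 < \<epsilon>"
    unfolding \<epsilon>_def using assms(1) bessel_zeros_bound_nonneg[of n] by simp
  have sums: "(\<lambda>j. bessel_gf_coeff n j * z^j) sums bessel_gf n z" if "norm z < \<epsilon>" for z
  proof (cases "z = 0")
    case True
    then show ?thesis
      by (simp add: bessel_gf_coeff_def bessel_gf_def power_0_left sums_0 split: nat.split)
  next
    case False
    have "norm z < x" "norm z < 1 / (1 + bessel_zeros_bound n)"
      using that unfolding \<epsilon>_def by simp_all
    moreover have "x < 10*x/(9+x)"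
      using assms(1,2) by (simp add: field_simps)
    ultimately have "bessel_denom n z \<noteq> 0"
      by (intro bessel_denom_nonzero[OF assms]) simp
    then have "poly (bessel_prod n) (2*(1-z)/z) \<noteq> 0"
      using False by (simp add: bessel_denom_eq)
    moreover have "norm z * (1 + bessel_zeros_bound n) < 1"
      using \<open>norm z < 1 / (1 + bessel_zeros_bound n)\<close> bessel_zeros_bound_nonneg[of n]
      by (simp add: field_simps)
    ultimately show ?thesis
      using False \<open>norm z < x\<close> assms(2) by (intro bessel_gf_sums) auto
  qed
  have "norm (of_real (\<epsilon>/2) :: complex) < \<epsilon>"
    using \<open>0 < \<epsilon>\<close> by simp
  then have "summable (\<lambda>j. bessel_gf_coeff n j * of_real (\<epsilon>/2) ^ j)"
    using sums sums_summable by blast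
  then have "norm (of_real (\<epsilon>/2) :: complex) \<le> conv_radius (bessel_gf_coeff n)"
    by (rule conv_radius_geI)
  then have "0 < fps_conv_radius (Abs_fps (bessel_gf_coeff n))"
    using \<open>0 < \<epsilon>\<close> unfolding fps_conv_radius_def by (auto intro: less_le_trans[rotated])
  moreover have "eventually (\<lambda>z. eval_fps (Abs_fps (bessel_gf_coeff n)) z = bessel_gf n z) (nhds 0)"
    using \<open>0 < \<epsilon>\<close> sums unfolding eventually_nhds_metric eval_fps_def by (auto simp: sums_iff)
  ultimately show ?thesis
    unfolding has_fps_expansion_def by simp
qed

lemma norm_of_nat_minus_A_bessel_le:
  fixes x :: real
  assumes "0 < x" "x < 1" "x^2 \<le> real (n+1) * (1-x)^2" "2 \<le> n"
  shows "norm (of_nat m - A_bessel m n) \<le> 6 / ((bessel_lead n)^2 * (2*(1-x)/x)^(2*n+2)) / x^Suc m"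
proof -
  define B where "B = 6 / ((bessel_lead n)^2 * (2*(1-x)/x)^(2*n+2))"
  have hol: "bessel_gf n holomorphic_on ball 0 (10*x/(9+x))"
    by (rule bessel_gf_holomorphic[OF assms])
  have "x < 10*x/(9+x)"
    using assms(1,2) by (simp add: field_simps)
  then have sub: "cball 0 x \<subseteq> ball 0 (10*x/(9+x))"
    by auto
  have Cauchy: "norm ((deriv ^^ Suc m) (bessel_gf n) 0) \<le> fact (Suc m) * B / x^Suc m"
  proof (rule Cauchy_inequality)
    show "bessel_gf n holomorphic_on ball 0 x"
      using hol sub ball_subset_cball by (blast intro: holomorphic_on_subset)
    show "continuous_on (cball 0 x) (bessel_gf n)"
      using holomorphic_on_imp_continuous_on[OF hol] sub by (rule continuous_on_subset)
    show "norm (bessel_gf n z) \<le> B" if "norm (0 - z) = x" for z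
      using that norm_bessel_gf_le[OF assms] unfolding B_def by simp
  qed (rule assms(1))
  have "A_bessel m n - of_nat m = (deriv ^^ Suc m) (bessel_gf n) 0 / fact (Suc m)"
    using fps_nth_fps_expansion[OF bessel_gf_has_fps_expansion[OF assms], of "Suc m"]
    by (simp add: bessel_gf_coeff_def)
  then have "norm (of_nat m - A_bessel m n) = norm ((deriv ^^ Suc m) (bessel_gf n) 0) / fact (Suc m)"
    by (simp only: norm_minus_commute[of "of_nat m"] norm_divide norm_fact)
  also have "\<dots> \<le> (fact (Suc m) * B / x^Suc m) / fact (Suc m)"
    using Cauchy by (rule divide_right_mono) simp
  also have "\<dots> = B / x^Suc m"
    by simp
  finally show ?thesis
    unfolding B_def .
qed

lemma bessel_bound_less:
  fixes x :: real
  assumes "0 < x" "x < 1" "m \<ge> 2*n+1"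
  shows "6 / ((bessel_lead n)^2 * (2*(1-x)/x)^(2*n+2)) / x^Suc m
    < 2 * x powi (int (2*n+1) - int m) / (1-x)^(2*n+2) * ((fact n)^2 / (fact (2*n))^2)"
proof -
  define d where "d = m - (2*n+1)"
  have "int (2*n+1) - int m = - int d"
    using assms(3) unfolding d_def by simp
  then have powi: "x powi (int (2*n+1) - int m) = 1 / x^d"
    by (simp add: power_int_minus_divide)
  have "Suc m = (2*n+2) + d"
    using assms(3) unfolding d_def by simp
  then have pow: "x^Suc m = x^(2*n+2) * x^d"
    by (simp only: power_add)
  have "(2::real)^(2*n+2) = 4 * (2^n)^2"
    by (simp add: power_add power_mult[symmetric] mult.commute)
  then have base: "(2*(1-x)/x)^(2*n+2) = 4 * (2^n)^2 * (1-x)^(2*n+2) / x^(2*n+2)"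
    by (simp only: power_divide power_mult_distrib)
  have lead: "(bessel_lead n)^2 = (fact (2*n))^2 / ((fact n)^2 * (2^n)^2)"
    unfolding bessel_lead_def by (simp add: power_divide power_mult_distrib)
  have field_ineq: "6 / ((F^2 / (f^2 * p)) * (4 * p * w / y)) / (y * e) < 2 * (1/e) / w * (f^2 / F^2)"
    if "0 < w" "0 < y" "0 < e" "0 < f" "0 < F" "0 < p" for w y e f F p :: real
    using that by (simp add: field_simps power2_eq_square)
  show ?thesis
    unfolding powi pow base lead by (rule field_ineq) (use assms(1,2) in simp_all)
qed

theorem mainTheorem8:
  fixes x :: real and n m :: nat
  assumes "0 < x" "x < 1" and "real n \<ge> n0 x" and "m \<ge> 2*n+1"
  shows "norm (of_nat m - A_bessel m n) <
    2 * x powi (int (2*n+1) - int m) / (1-x)^(2*n+2) * ((fact n)^2 / (fact (2*n))^2)"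
proof -
  have "2 \<le> n" "x^2 / (1-x)^2 \<le> real n + 1"
    using assms(3) unfolding n0_def by simp_all
  then have "x^2 \<le> real (n+1) * (1-x)^2"
    using assms(1,2) by (simp add: field_simps)
  then have "norm (of_nat m - A_bessel m n) \<le> 6 / ((bessel_lead n)^2 * (2*(1-x)/x)^(2*n+2)) / x^Suc m"
    by (rule norm_of_nat_minus_A_bessel_le[OF assms(1,2) _ \<open>2 \<le> n\<close>])
  also have "\<dots> < 2 * x powi (int (2*n+1) - int m) / (1-x)^(2*n+2) * ((fact n)^2 / (fact (2*n))^2)"
    by (rule bessel_bound_less[OF assms(1,2,4)])
  finally show ?thesis .
qed

end
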